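(* Let $\delta=\inf(\sigma(-\Delta)\setminus\{0\})\ge0$. (i) If $\delta>0$, then for every $\varepsilon>0$ one has the continuous embedding $H^{2\varepsilon}(M)\subset H^{\log}(M)$. (ii) If $\delta=0$ and, for every $k=1,2,\dots$, the interval $I_k=\big(\tfrac1{k+1},\tfrac1k\big]$ satisfies $I_k\cap\sigma(-\Delta)\neq\emptyset$, then for every $\varepsilon>0$ there exists $f\in H^{2\varepsilon}(M)$ with $f\notin H^{\log}(M)$.
   Context: Standing setting: $-\Delta$ is a self-adjoint operator on $L^2(M,\mu)$ with spectrum $\sigma(-\Delta)\subset[0,\infty)$ and projection-valued spectral measure $E$; $E_{f,g}(B)=\langle E(B)f,g\rangle$. For $\tau\ge0$, $H^{\tau}(M)=\{f\in L^2(M,\mu):\int_{[0,\infty)}\lambda^{\tau}\,dE_{f,f}(\lambda)<\infty\}$ with norm $\|f\|^2_{H^\tau}=\int(1+\lambda)^{\tau}dE_{f,f}$ (so $H^{2s}(M)$ is the domain of $(-\Delta)^s=\int\lambda^s dE$). $H^{\log}(M)=\{f\in L^2(M,\mu):\int_{(0,\infty)}(\log\lambda)^2\,dE_{f,f}(\lambda)<\infty\}$ with norm $\|f\|_{\log}^2=\|f\|_{L^2}^2+\int_{(0,\infty)}(\log\lambda)^2dE_{f,f}$. *)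

theory Defs
  imports "HOL-Analysis.Analysis"
begin

definition pvm :: "(real set \<Rightarrow> 'h::{real_inner,complete_space} \<Rightarrow> 'h) \<Rightarrow> bool" where
  "pvm E \<longleftrightarrow>
     (\<forall>B\<in>sets borel. bounded_linear (E B)
        \<and> (\<forall>x. E B (E B x) = E B x)
        \<and> (\<forall>x y. inner (E B x) y = inner x (E B y)))
   \<and> E {} = (\<lambda>x. 0)
   \<and> E UNIV = id
   \<and> (\<forall>A\<in>sets borel. \<forall>B\<in>sets borel. \<forall>x. E (A \<inter> B) x = E A (E B x))
   \<and> (\<forall>A x. range A \<subseteq> sets borel \<longrightarrow> disjoint_family A \<longrightarrow>
        (\<lambda>n. E (A n) x) sums E (\<Union>n. A n) x)"

text \<open>Spectrum of the operator \<open>\<integral>\<lambda> dE\<close>: the support of its spectral measure.\<close>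
definition pvm_spectrum :: "(real set \<Rightarrow> 'h::real_inner \<Rightarrow> 'h) \<Rightarrow> real set" where
  "pvm_spectrum E = {l. \<forall>e>0. E {l - e<..<l + e} \<noteq> (\<lambda>x. 0)}"

text \<open>delta = inf (sigma \ {0}), taken in the extended reals (inf of the empty set is +infinity).\<close>
definition spec_delta :: "(real set \<Rightarrow> 'h::real_inner \<Rightarrow> 'h) \<Rightarrow> ereal" where
  "spec_delta E = Inf (ereal ` (pvm_spectrum E - {0}))"

definition spec_measure :: "(real set \<Rightarrow> 'h::real_inner \<Rightarrow> 'h) \<Rightarrow> 'h \<Rightarrow> real measure" where
  "spec_measure E f = measure_of UNIV (sets borel) (\<lambda>B. ennreal (inner (E B f) f))"

definition rpow :: "real \<Rightarrow> real \<Rightarrow> real" where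
  "rpow l t = (if l < 0 then 0 else if l = 0 then (if t = 0 then 1 else 0) else l powr t)"

definition Hsob :: "(real set \<Rightarrow> 'h::real_inner \<Rightarrow> 'h) \<Rightarrow> real \<Rightarrow> 'h set" where
  "Hsob E t = {f. (\<integral>\<^sup>+ l. ennreal (rpow l t) \<partial>spec_measure E f) < \<infinity>}"

definition Hsob_norm2 :: "(real set \<Rightarrow> 'h::real_inner \<Rightarrow> 'h) \<Rightarrow> real \<Rightarrow> 'h \<Rightarrow> ennreal" where
  "Hsob_norm2 E t f = (\<integral>\<^sup>+ l. indicator {0..} l * ennreal ((1 + l) powr t) \<partial>spec_measure E f)"

definition Hlog :: "(real set \<Rightarrow> 'h::real_inner \<Rightarrow> 'h) \<Rightarrow> 'h set" where
  "Hlog E = {f. (\<integral>\<^sup>+ l. indicator {0<..} l * ennreal ((ln l)\<^sup>2) \<partial>spec_measure E f) < \<infinity>}"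

definition Hlog_norm2 :: "(real set \<Rightarrow> 'h::real_inner \<Rightarrow> 'h) \<Rightarrow> 'h \<Rightarrow> ennreal" where
  "Hlog_norm2 E f = ennreal ((norm f)\<^sup>2)
     + (\<integral>\<^sup>+ l. indicator {0<..} l * ennreal ((ln l)\<^sup>2) \<partial>spec_measure E f)"

definition cont_embed_log :: "(real set \<Rightarrow> 'h::real_inner \<Rightarrow> 'h) \<Rightarrow> real \<Rightarrow> bool" where
  "cont_embed_log E t \<longleftrightarrow> Hsob E t \<subseteq> Hlog E \<and>
     (\<exists>C::real. C \<ge> 0 \<and> (\<forall>f\<in>Hsob E t. Hlog_norm2 E f \<le> ennreal C * Hsob_norm2 E t f))"

end

(* (i) If the nonzero spectrum lies above some d > 0, the spectral measure of every f
   is carried by {0} and (d, \<infinity>), and on (d, \<infinity>) the elementary bound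
   (ln \<lambda>)\<^sup>2 \<le> (|ln d| + 1/\<epsilon>)\<^sup>2 (1 + \<lambda>) powr (2\<epsilon>) dominates the H^log integrand by the
   H^(2\<epsilon>) integrand.
   (ii) If every interval (1/(k+1), 1/k] meets the spectrum, one finds disjoint open windows
   A_j \<subseteq> (0, exp(-4^j)] with E(A_j) \<noteq> 0. Summing 2^-j u_j with unit vectors u_j in the
   ranges of E(A_j) gives f whose spectral measure lives in (0, 1], so f lies in every H^\<tau>,
   while its H^log integral is at least 16^j 4^-j = 4^j for every j. *)

theory Submission
  imports Defs
begin

text \<open>The library's \<open>summable_norm_cancel\<close> needs sort \<open>banach\<close>, which the sort
  \<open>{real_inner, complete_space}\<close> of the Hilbert space does not provide.\<close>

lemma summable_norm_cancel_complete:
  fixes f :: "nat \<Rightarrow> 'a::{real_normed_vector,complete_space}"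
  assumes "summable (\<lambda>n. norm (f n))"
  shows "summable f"
proof -
  let ?S = "\<lambda>n. \<Sum>i<n. f i" and ?T = "\<lambda>n. \<Sum>i<n. norm (f i)"
  have dist_le_ordered: "dist (?S m) (?S n) \<le> dist (?T m) (?T n)" if "m \<le> n" for m n
  proof -
    have "?S n - ?S m = (\<Sum>i\<in>{m..<n}. f i)"
      using sum_diff[of "{..<n}" "{..<m}" f] that by (simp add: lessThan_minus_lessThan)
    moreover have "?T n - ?T m = (\<Sum>i\<in>{m..<n}. norm (f i))"
      using sum_diff[of "{..<n}" "{..<m}" "\<lambda>i. norm (f i)"] that
      by (simp add: lessThan_minus_lessThan)
    moreover have "norm (\<Sum>i\<in>{m..<n}. f i) \<le> (\<Sum>i\<in>{m..<n}. norm (f i))"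
      by (rule norm_sum)
    ultimately show ?thesis
      by (simp add: dist_norm dist_real_def norm_minus_commute[of "?S m"] abs_minus_commute[of "?T m"])
  qed
  then have dist_le: "dist (?S m) (?S n) \<le> dist (?T m) (?T n)" for m n
    by (metis dist_commute nat_le_linear)
  have "Cauchy ?T"
    using assms by (simp add: summable_iff_convergent Cauchy_convergent_iff)
  then have "Cauchy ?S"
    unfolding Cauchy_def using dist_le by (meson le_less_trans)
  then show ?thesis
    by (simp add: summable_iff_convergent Cauchy_convergent)
qed

lemma ln_sq_le_powr:
  fixes d l e :: real
  assumes "0 < d" "d < l" "0 < e"
  shows "(ln l)\<^sup>2 \<le> (\<bar>ln d\<bar> + 1 / e)\<^sup>2 * (1 + l) powr (2 * e)"
proof -
  define P where "P = (1 + l) powr e"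
  have P: "1 \<le> P" unfolding P_def using assms by (intro ge_one_powr_ge_zero) auto
  have "\<bar>ln l\<bar> \<le> (\<bar>ln d\<bar> + 1 / e) * P"
  proof (cases "l \<le> 1")
    case True
    then have "\<bar>ln l\<bar> \<le> \<bar>ln d\<bar>" using assms by (simp add: ln_le_zero_iff)
    also have "\<dots> \<le> \<bar>ln d\<bar> * P" using P by (simp add: mult_le_cancel_left1)
    also have "\<dots> \<le> (\<bar>ln d\<bar> + 1 / e) * P" using P assms(3) by (intro mult_right_mono) auto
    finally show ?thesis .
  next
    case False
    then have "\<bar>ln l\<bar> \<le> ln (1 + l)" by simp
    also have "\<dots> \<le> P / e" unfolding P_def using assms by (intro ln_powr_bound) auto
    also have "\<dots> \<le> (\<bar>ln d\<bar> + 1 / e) * P" using P by (simp add: distrib_right)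
    finally show ?thesis .
  qed
  then have "\<bar>ln l\<bar>\<^sup>2 \<le> ((\<bar>ln d\<bar> + 1 / e) * P)\<^sup>2" by (rule power_mono) simp
  moreover have "P\<^sup>2 = (1 + l) powr (2 * e)"
    unfolding P_def power2_eq_square by (simp add: powr_add[symmetric])
  ultimately show ?thesis by (simp add: power_mult_distrib)
qed

lemma rpow_nonneg: "0 \<le> rpow l t"
  unfolding rpow_def by simp

lemma one_plus_powr_le_rpow:
  fixes l t :: real
  assumes "0 \<le> l" "0 \<le> t"
  shows "(1 + l) powr t \<le> 2 powr t * (1 + rpow l t)"
proof (cases "l \<le> 1")
  case True
  have "(1 + l) powr t \<le> 2 powr t" using True assms by (intro powr_mono2) auto
  also have "\<dots> \<le> 2 powr t * (1 + rpow l t)"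
    using rpow_nonneg[of l t] by (simp add: mult_le_cancel_left1)
  finally show ?thesis .
next
  case False
  have "(1 + l) powr t \<le> (2 * l) powr t" using False assms by (intro powr_mono2) auto
  also have "\<dots> = 2 powr t * l powr t" using False by (simp add: powr_mult)
  also have "\<dots> \<le> 2 powr t * (1 + rpow l t)" using False unfolding rpow_def by simp
  finally show ?thesis .
qed

lemma rpow_le_one: "0 \<le> l \<Longrightarrow> l \<le> 1 \<Longrightarrow> 0 \<le> t \<Longrightarrow> rpow l t \<le> 1"
  unfolding rpow_def by (auto intro: powr_le1)

lemma ln_sq_ge_if_le_exp:
  fixes a l :: real
  assumes "0 < l" "l \<le> exp (- a)" "0 \<le> a"
  shows "a\<^sup>2 \<le> (ln l)\<^sup>2"
proof -
  have "ln l \<le> - a"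
    using assms(1,2) ln_le_cancel_iff[of l "exp (- a)"] by simp
  then have "a\<^sup>2 \<le> (- ln l)\<^sup>2"
    using assms(3) by (intro power_mono) auto
  then show ?thesis by simp
qed

lemma borel_measurable_rpow[measurable]: "(\<lambda>l. rpow l t) \<in> borel_measurable borel"
  unfolding rpow_def by measurable

lemma spectral_gap_if_spec_delta_pos:
  assumes "spec_delta E > 0"
  obtains d where "0 < d" "pvm_spectrum E \<inter> {0<..d} = {}"
proof -
  obtain d where d: "0 < ereal d" "ereal d < spec_delta E"
    using ereal_dense2[OF assms] by blast
  have "d < l" if "l \<in> pvm_spectrum E" "0 < l" for l
  proof -
    have "spec_delta E \<le> ereal l"
      unfolding spec_delta_def using that by (intro Inf_lower) auto
    then show ?thesis using less_le_trans[OF d(2)] by force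
  qed
  with d(1) show ?thesis by (intro that[of d]) force+
qed

definition odd_recip_interval :: "nat \<Rightarrow> real set" where
  "odd_recip_interval m = {1 / (2 * real m + 1)<..<1 / (2 * real m - 1)}"

lemma odd_recip_interval_disjoint:
  assumes "m < n" "1 \<le> m"
  shows "odd_recip_interval m \<inter> odd_recip_interval n = {}"
proof -
  have "1 / (2 * real n - 1) \<le> 1 / (2 * real m + 1)"
    using assms by (intro divide_left_mono) auto
  then show ?thesis unfolding odd_recip_interval_def by auto
qed

lemma odd_recip_interval_subset:
  assumes "1 \<le> m"
  shows "odd_recip_interval m \<subseteq> {0<..<1 / real m}"
proof -
  have "1 / (2 * real m - 1) \<le> 1 / real m"
    using assms by (intro divide_left_mono) auto
  moreover have pos: "0 < 1 / (2 * real m + 1)" by simp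
  ultimately show ?thesis unfolding odd_recip_interval_def by (auto intro: less_trans[OF pos])
qed

locale projection_valued_measure =
  fixes E :: "real set \<Rightarrow> 'h::{real_inner,complete_space} \<Rightarrow> 'h"
  assumes pvm: "pvm E"
begin

lemma
  assumes "B \<in> sets borel"
  shows E_bounded_linear: "bounded_linear (E B)"
    and E_idem: "E B (E B x) = E B x"
    and E_self_adjoint: "inner (E B x) y = inner x (E B y)"
  using pvm assms unfolding pvm_def by auto

lemma E_empty: "E {} x = 0"
  using pvm unfolding pvm_def by simp

lemma E_UNIV: "E UNIV x = x"
  using pvm unfolding pvm_def by simp

lemma E_Int: "A \<in> sets borel \<Longrightarrow> B \<in> sets borel \<Longrightarrow> E (A \<inter> B) x = E A (E B x)"
  using pvm unfolding pvm_def by blast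

lemma E_sums:
  "range A \<subseteq> sets borel \<Longrightarrow> disjoint_family A \<Longrightarrow> (\<lambda>n. E (A n) x) sums E (\<Union>n. A n) x"
  using pvm unfolding pvm_def by blast

lemma E_zero: "B \<in> sets borel \<Longrightarrow> E B 0 = 0"
  by (rule linear_0[OF bounded_linear.linear[OF E_bounded_linear]])

lemma E_scaleR: "B \<in> sets borel \<Longrightarrow> E B (c *\<^sub>R x) = c *\<^sub>R E B x"
  by (rule linear_scale[OF bounded_linear.linear[OF E_bounded_linear]])

lemma E_disjoint: "A \<in> sets borel \<Longrightarrow> B \<in> sets borel \<Longrightarrow> A \<inter> B = {} \<Longrightarrow> E A (E B x) = 0"
  using E_Int[of A B x] by (simp add: E_empty)

lemma E_subset_vanish:
  assumes "A \<in> sets borel" "B \<in> sets borel" "A \<subseteq> B" "E B = (\<lambda>x. 0)"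
  shows "E A = (\<lambda>x. 0)"
proof
  fix x
  have "E A x = E A (E B x)" using E_Int[of A B x] assms(1-3) by (simp add: Int_absorb2)
  then show "E A x = 0" using assms(1,4) by (simp add: E_zero)
qed

lemma inner_E_self:
  assumes "B \<in> sets borel"
  shows "inner (E B f) f = (norm (E B f))\<^sup>2"
proof -
  have "inner (E B f) f = inner (E B (E B f)) f" using assms by (simp add: E_idem)
  also have "\<dots> = inner (E B f) (E B f)" using assms by (rule E_self_adjoint)
  finally show ?thesis by (simp add: power2_norm_eq_inner)
qed

lemma sets_spec_measure [simp, measurable_cong]: "sets (spec_measure E f) = sets borel"
  unfolding spec_measure_def by (metis sets.sets_measure_of_eq space_borel)

lemma space_spec_measure [simp]: "space (spec_measure E f) = UNIV"
  by (metis sets_eq_imp_space_eq sets_spec_measure space_borel)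

lemma emeasure_spec_measure:
  assumes "B \<in> sets borel"
  shows "emeasure (spec_measure E f) B = ennreal ((norm (E B f))\<^sup>2)"
proof -
  have "emeasure (spec_measure E f) B = ennreal (inner (E B f) f)"
    unfolding spec_measure_def
  proof (rule emeasure_measure_of_sigma)
    show "sigma_algebra UNIV (sets borel)" by (metis sets.sigma_algebra_axioms space_borel)
    show "positive (sets borel) (\<lambda>B. ennreal (inner (E B f) f))"
      unfolding positive_def by (simp add: E_empty)
    show "countably_additive (sets borel) (\<lambda>B. ennreal (inner (E B f) f))"
      unfolding countably_additive_def
    proof clarify
      fix A :: "nat \<Rightarrow> real set"
      assume A: "range A \<subseteq> sets borel" "disjoint_family A"
      have "(\<lambda>n. inner (E (A n) f) f) sums inner (E (\<Union>n. A n) f) f"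
        using bounded_linear.sums[OF bounded_linear_inner_left E_sums[OF A]] .
      moreover have "0 \<le> inner (E (A n) f) f" for n
        using A(1) by (simp add: inner_E_self range_subsetD)
      ultimately show "(\<Sum>n. ennreal (inner (E (A n) f) f)) = ennreal (inner (E (\<Union>(range A)) f) f)"
        by (rule suminf_ennreal_eq[rotated])
    qed
  qed (fact assms)
  then show ?thesis using assms by (simp add: inner_E_self)
qed

lemma emeasure_spec_measure_UNIV: "emeasure (spec_measure E f) UNIV = ennreal ((norm f)\<^sup>2)"
  by (simp add: emeasure_spec_measure E_UNIV)

lemma null_sets_spec_measure:
  assumes B: "B \<in> sets borel" and disj: "B \<inter> pvm_spectrum E = {}"
  shows "B \<in> null_sets (spec_measure E f)"
proof -
  define I where "I = {(p, q). p \<in> \<rat> \<and> q \<in> \<rat> \<and> E {p<..<q} = (\<lambda>x. 0)}"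
  have "countable I"
    unfolding I_def by (rule countable_subset[of _ "\<rat> \<times> \<rat>"]) (auto simp: countable_rat)
  moreover have "{p<..<q} \<in> null_sets (spec_measure E f)" if "(p, q) \<in> I" for p q
    using that by (simp add: I_def null_sets_def emeasure_spec_measure)
  ultimately have null: "(\<Union>(p, q)\<in>I. {p<..<q}) \<in> null_sets (spec_measure E f)"
    by (intro null_sets_UN') auto
  have "B \<subseteq> (\<Union>(p, q)\<in>I. {p<..<q})"
  proof
    fix x assume "x \<in> B"
    then have "x \<notin> pvm_spectrum E" using disj by auto
    then obtain e where e: "e > 0" "E {x - e<..<x + e} = (\<lambda>x. 0)"
      unfolding pvm_spectrum_def by auto
    obtain p where p: "p \<in> \<rat>" "x - e < p" "p < x" using Rats_dense_in_real[of "x - e" x] e by auto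
    obtain q where q: "q \<in> \<rat>" "x < q" "q < x + e" using Rats_dense_in_real[of x "x + e"] e by auto
    have "E {p<..<q} = (\<lambda>x. 0)"
      using p q by (intro E_subset_vanish[OF _ _ _ e(2)]) auto
    then have "(p, q) \<in> I" using p q unfolding I_def by auto
    then show "x \<in> (\<Union>(p, q)\<in>I. {p<..<q})" using p q by force
  qed
  with B show ?thesis by (intro null_sets_subset[OF null]) simp_all
qed

lemma AE_spec_measure_notin:
  "B \<in> sets borel \<Longrightarrow> B \<inter> pvm_spectrum E = {} \<Longrightarrow> AE l in spec_measure E f. l \<notin> B"
  by (rule AE_not_in[OF null_sets_spec_measure])

lemma E_nonzero_near_spectrum:
  assumes "l \<in> pvm_spectrum E" "open U" "l \<in> U"
  shows "E U \<noteq> (\<lambda>x. 0)"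
proof
  assume U: "E U = (\<lambda>x. 0)"
  obtain e where e: "e > 0" "ball l e \<subseteq> U"
    using openE[OF assms(2,3)] by blast
  have "ball l e = {l - e<..<l + e}"
    by (auto simp: ball_def dist_real_def)
  then have "E {l - e<..<l + e} = (\<lambda>x. 0)"
    using e(2) borel_open[OF assms(2)] by (intro E_subset_vanish[OF _ _ _ U]) auto
  then show False using assms(1) e(1) unfolding pvm_spectrum_def by auto
qed

lemma exists_unit_vector_in_range:
  assumes "B \<in> sets borel" "E B \<noteq> (\<lambda>x. 0)"
  obtains u where "norm u = 1" "E B u = u"
proof -
  obtain g where g: "E B g \<noteq> 0"
    using assms(2) by (auto simp: fun_eq_iff)
  show ?thesis
  proof (rule that[of "(1 / norm (E B g)) *\<^sub>R E B g"])
    show "norm ((1 / norm (E B g)) *\<^sub>R E B g) = 1" using g by simp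
    show "E B ((1 / norm (E B g)) *\<^sub>R E B g) = (1 / norm (E B g)) *\<^sub>R E B g"
      using assms(1) by (simp add: E_scaleR E_idem)
  qed
qed

lemma AE_spec_measure_in:
  assumes "B \<in> sets borel" "E (- B) f = 0"
  shows "AE l in spec_measure E f. l \<in> B"
proof -
  have "- B \<in> null_sets (spec_measure E f)"
    using assms by (simp add: null_sets_def emeasure_spec_measure borel_comp)
  then show ?thesis by (auto dest: AE_not_in)
qed

lemma Hsob_norm2_finite:
  assumes "0 \<le> t" "f \<in> Hsob E t"
  shows "Hsob_norm2 E t f < \<infinity>"
proof -
  have "Hsob_norm2 E t f \<le> (\<integral>\<^sup>+ l. ennreal (2 powr t) * (1 + ennreal (rpow l t)) \<partial>spec_measure E f)"
    unfolding Hsob_norm2_def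
  proof (rule nn_integral_mono)
    fix l :: real
    show "indicator {0..} l * ennreal ((1 + l) powr t) \<le> ennreal (2 powr t) * (1 + ennreal (rpow l t))"
    proof (cases "0 \<le> l")
      case True
      then have "ennreal ((1 + l) powr t) \<le> ennreal (2 powr t * (1 + rpow l t))"
        using assms(1) by (intro ennreal_leI one_plus_powr_le_rpow)
      also have "\<dots> = ennreal (2 powr t) * (1 + ennreal (rpow l t))"
        by (simp add: ennreal_mult ennreal_plus rpow_nonneg)
      finally show ?thesis using True by simp
    qed simp
  qed
  also have "\<dots> = ennreal (2 powr t) * (ennreal ((norm f)\<^sup>2) + (\<integral>\<^sup>+ l. ennreal (rpow l t) \<partial>spec_measure E f))"
    by (simp add: nn_integral_cmult nn_integral_add emeasure_spec_measure_UNIV)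
  also have "\<dots> < \<infinity>"
    using assms(2) unfolding Hsob_def by (simp add: ennreal_mult_less_top)
  finally show ?thesis .
qed

lemma norm_sq_le_Hsob_norm2:
  assumes "pvm_spectrum E \<subseteq> {0..}" "0 \<le> t"
  shows "ennreal ((norm f)\<^sup>2) \<le> Hsob_norm2 E t f"
proof -
  have "AE l in spec_measure E f. l \<notin> {..<0}"
    using assms(1) by (intro AE_spec_measure_notin) auto
  then have "(\<integral>\<^sup>+ l. 1 \<partial>spec_measure E f) \<le> Hsob_norm2 E t f"
    unfolding Hsob_norm2_def
  proof (intro nn_integral_mono_AE, eventually_elim)
    case (elim l)
    then have "1 \<le> (1 + l) powr t" using assms(2) by (intro ge_one_powr_ge_zero) auto
    with elim show ?case by simp
  qed
  then show ?thesis by (simp add: emeasure_spec_measure_UNIV)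
qed

lemma Hlog_integral_le_Hsob_norm2:
  assumes "0 < d" "0 < e" "pvm_spectrum E \<inter> {0<..d} = {}"
  shows "(\<integral>\<^sup>+ l. indicator {0<..} l * ennreal ((ln l)\<^sup>2) \<partial>spec_measure E f)
    \<le> ennreal ((\<bar>ln d\<bar> + 1 / e)\<^sup>2) * Hsob_norm2 E (2 * e) f"
proof -
  define C where "C = (\<bar>ln d\<bar> + 1 / e)\<^sup>2"
  have "AE l in spec_measure E f. l \<notin> {0<..d}"
    using assms(3) by (intro AE_spec_measure_notin) auto
  then have "(\<integral>\<^sup>+ l. indicator {0<..} l * ennreal ((ln l)\<^sup>2) \<partial>spec_measure E f)
      \<le> (\<integral>\<^sup>+ l. ennreal C * (indicator {0..} l * ennreal ((1 + l) powr (2 * e))) \<partial>spec_measure E f)"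
  proof (intro nn_integral_mono_AE, eventually_elim)
    case (elim l)
    show ?case
    proof (cases "0 < l")
      case True
      with elim have "d < l" by auto
      then have "(ln l)\<^sup>2 \<le> C * (1 + l) powr (2 * e)"
        unfolding C_def using assms(1,2) by (intro ln_sq_le_powr)
      then show ?thesis using True by (simp add: ennreal_mult[symmetric] ennreal_leI C_def)
    qed simp
  qed
  also have "\<dots> = ennreal C * Hsob_norm2 E (2 * e) f"
    unfolding Hsob_norm2_def by (rule nn_integral_cmult) measurable
  finally show ?thesis unfolding C_def .
qed

lemma cont_embed_log_if_spectral_gap:
  assumes "pvm_spectrum E \<subseteq> {0..}" "0 < d" "pvm_spectrum E \<inter> {0<..d} = {}" "0 < e"
  shows "cont_embed_log E (2 * e)"
proof -
  define C where "C = (\<bar>ln d\<bar> + 1 / e)\<^sup>2"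
  have bound: "Hlog_norm2 E f \<le> ennreal (1 + C) * Hsob_norm2 E (2 * e) f" for f
  proof -
    have "Hlog_norm2 E f \<le> Hsob_norm2 E (2 * e) f + ennreal C * Hsob_norm2 E (2 * e) f"
      unfolding Hlog_norm2_def C_def using assms
      by (intro add_mono norm_sq_le_Hsob_norm2 Hlog_integral_le_Hsob_norm2) auto
    also have "\<dots> = ennreal (1 + C) * Hsob_norm2 E (2 * e) f"
      by (simp add: C_def ennreal_plus distrib_right)
    finally show ?thesis .
  qed
  have "f \<in> Hlog E" if "f \<in> Hsob E (2 * e)" for f
  proof -
    have "Hsob_norm2 E (2 * e) f < \<infinity>"
      using that assms(4) by (intro Hsob_norm2_finite) auto
    then have "Hlog_norm2 E f < \<infinity>"
      using bound[of f] by (simp add: ennreal_mult_less_top le_less_trans)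
    then show ?thesis unfolding Hlog_def Hlog_norm2_def by simp
  qed
  then show ?thesis
    unfolding cont_embed_log_def using bound by (intro conjI exI[of _ "1 + C"]) (auto simp: C_def)
qed

lemma E_sums_scaleR:
  assumes "B \<in> sets borel" "(\<lambda>j. c j *\<^sub>R u j) sums f"
  shows "(\<lambda>j. c j *\<^sub>R E B (u j)) sums E B f"
proof -
  have "(\<lambda>j. E B (c j *\<^sub>R u j)) sums E B f"
    by (rule bounded_linear.sums[OF E_bounded_linear[OF assms(1)] assms(2)])
  with assms(1) show ?thesis by (simp add: E_scaleR)
qed

lemma E_sums_disjoint_ranges:
  assumes A: "\<And>j. A j \<in> sets borel" "disjoint_family A"
    and u: "\<And>j. E (A j) (u j) = u j"
    and f: "(\<lambda>j. c j *\<^sub>R u j) sums f"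
  shows "E (A j) f = c j *\<^sub>R u j"
proof -
  have "c i *\<^sub>R E (A j) (u i) = (if i = j then c j *\<^sub>R u j else 0)" for i
  proof (cases "i = j")
    case False
    then have "A j \<inter> A i = {}" using A(2) by (simp add: disjoint_family_on_def)
    then have "E (A j) (E (A i) (u i)) = 0" by (intro E_disjoint A(1))
    with False show ?thesis by (simp add: u)
  qed (simp add: u)
  then have "(\<lambda>i. c i *\<^sub>R E (A j) (u i)) = (\<lambda>i. if i = j then c j *\<^sub>R u j else 0)"
    by (rule ext)
  then have "(\<lambda>i. c i *\<^sub>R E (A j) (u i)) sums (c j *\<^sub>R u j)"
    using sums_single[of j "\<lambda>_. c j *\<^sub>R u j"] by (simp only:)
  then show ?thesis using E_sums_scaleR[OF A(1) f] by (rule sums_unique2[symmetric])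
qed

lemma exists_vector_with_spectral_masses:
  assumes A: "\<And>j. A j \<in> sets borel" "disjoint_family A" "\<And>j. E (A j) \<noteq> (\<lambda>x. 0)"
    and c: "summable (\<lambda>j. \<bar>c j\<bar>)"
  obtains f where "\<And>j. emeasure (spec_measure E f) (A j) = ennreal ((c j)\<^sup>2)"
    and "AE l in spec_measure E f. l \<in> (\<Union>j. A j)"
proof -
  have "\<forall>j. \<exists>u. norm u = 1 \<and> E (A j) u = u"
    using exists_unit_vector_in_range[OF A(1,3)] by metis
  then obtain u where u_norm: "\<And>j. norm (u j) = 1" and u_fixed: "\<And>j. E (A j) (u j) = u j"
    by metis
  have "summable (\<lambda>j. norm (c j *\<^sub>R u j))"
    using c by (simp add: u_norm)
  then have "summable (\<lambda>j. c j *\<^sub>R u j)"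
    by (rule summable_norm_cancel_complete)
  then obtain f where f: "(\<lambda>j. c j *\<^sub>R u j) sums f"
    by (auto simp: summable_def)
  have "emeasure (spec_measure E f) (A j) = ennreal ((c j)\<^sup>2)" for j
    using E_sums_disjoint_ranges[OF A(1,2) u_fixed f]
    by (simp add: emeasure_spec_measure A(1) u_norm)
  moreover have "AE l in spec_measure E f. l \<in> (\<Union>j. A j)"
  proof (rule AE_spec_measure_in)
    show union: "(\<Union>j. A j) \<in> sets borel"
      using A(1) by (intro sets.countable_UN) blast
    then have outside: "- (\<Union>j. A j) \<in> sets borel"
      by (rule borel_comp)
    have "E (- (\<Union>j. A j)) (E (A j) (u j)) = 0" for j
      using outside A(1) by (rule E_disjoint) blast
    then have "(\<lambda>j. c j *\<^sub>R E (- (\<Union>j. A j)) (u j)) sums 0"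
      using sums_zero by (simp add: u_fixed)
    then show "E (- (\<Union>j. A j)) f = 0"
      by (rule sums_unique2[OF E_sums_scaleR[OF outside f]])
  qed
  ultimately show ?thesis by (rule that)
qed

lemma Hsob_if_AE_unit_interval:
  assumes "AE l in spec_measure E f. l \<in> {0..1}" "0 \<le> t"
  shows "f \<in> Hsob E t"
proof -
  have "(\<integral>\<^sup>+ l. ennreal (rpow l t) \<partial>spec_measure E f) \<le> (\<integral>\<^sup>+ l. 1 \<partial>spec_measure E f)"
    using assms(1)
    by (intro nn_integral_mono_AE, eventually_elim) (simp add: rpow_le_one assms(2) ennreal_le_1)
  also have "\<dots> < \<infinity>" by (simp add: emeasure_spec_measure_UNIV)
  finally show ?thesis unfolding Hsob_def by simp
qed

lemma emeasure_le_Hlog_integral: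
  assumes "A \<in> sets borel" "\<And>l. l \<in> A \<Longrightarrow> 0 < l \<and> a \<le> (ln l)\<^sup>2"
  shows "ennreal a * emeasure (spec_measure E f) A
    \<le> (\<integral>\<^sup>+ l. indicator {0<..} l * ennreal ((ln l)\<^sup>2) \<partial>spec_measure E f)"
proof -
  have "ennreal a * emeasure (spec_measure E f) A = (\<integral>\<^sup>+ l. ennreal a * indicator A l \<partial>spec_measure E f)"
    using assms(1) by (simp add: nn_integral_cmult_indicator)
  also have "\<dots> \<le> (\<integral>\<^sup>+ l. indicator {0<..} l * ennreal ((ln l)\<^sup>2) \<partial>spec_measure E f)"
    using assms(2) by (intro nn_integral_mono) (auto split: split_indicator intro: ennreal_leI)
  finally show ?thesis .
qed

text \<open>The open window is needed: E may vanish on \<open>(1/(2m+1), 1/(2m)]\<close> itself when the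
  only spectral point there is the endpoint \<open>1/(2m)\<close>.\<close>

lemma E_odd_recip_interval_nonzero:
  assumes spec: "\<forall>k::nat. k \<ge> 1 \<longrightarrow> {1 / real (k + 1)<..1 / real k} \<inter> pvm_spectrum E \<noteq> {}"
    and "1 \<le> m"
  shows "E (odd_recip_interval m) \<noteq> (\<lambda>x. 0)"
proof -
  have "1 \<le> 2 * m" using assms(2) by simp
  from spec[rule_format, OF this] obtain l
    where l: "l \<in> pvm_spectrum E" "l \<in> {1 / real (2 * m + 1)<..1 / real (2 * m)}"
    by blast
  have "1 / real (2 * m) < 1 / (2 * real m - 1)"
    using assms(2) by (simp add: divide_strict_left_mono)
  with l have "l \<in> odd_recip_interval m"
    unfolding odd_recip_interval_def by (auto simp: add.commute)
  then show ?thesis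
    using E_nonzero_near_spectrum[OF l(1)] unfolding odd_recip_interval_def by auto
qed

lemma spectral_pieces_near_zero:
  assumes spec: "\<forall>k::nat. k \<ge> 1 \<longrightarrow> {1 / real (k + 1)<..1 / real k} \<inter> pvm_spectrum E \<noteq> {}"
    and b: "\<And>j::nat. 0 < b j"
  obtains A where "\<And>j. A j \<in> sets borel" "disjoint_family A" "\<And>j. E (A j) \<noteq> (\<lambda>x. 0)"
    and "\<And>j. A j \<subseteq> {0<..b j}"
proof -
  define m where "m j = (\<Sum>i\<le>j. nat \<lceil>1 / b i\<rceil>) + j + 1" for j :: nat
  have m_pos: "1 \<le> m j" for j
    unfolding m_def by simp
  have "strict_mono m"
    unfolding strict_mono_Suc_iff m_def by simp
  have m_large: "1 / b j < real (m j)" for j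
  proof -
    have "1 / b j \<le> real (nat \<lceil>1 / b j\<rceil>)" by linarith
    also have "\<dots> \<le> real (\<Sum>i\<le>j. nat \<lceil>1 / b i\<rceil>)"
      by (intro of_nat_mono member_le_sum) auto
    finally show ?thesis unfolding m_def by simp
  qed
  show ?thesis
  proof (rule that[of "\<lambda>j. odd_recip_interval (m j)"])
    show "odd_recip_interval (m j) \<in> sets borel" for j
      unfolding odd_recip_interval_def by simp
    show "E (odd_recip_interval (m j)) \<noteq> (\<lambda>x. 0)" for j
      using E_odd_recip_interval_nonzero[OF spec m_pos] .
    show "disjoint_family (\<lambda>j. odd_recip_interval (m j))"
      unfolding disjoint_family_on_def
      using odd_recip_interval_disjoint m_pos \<open>strict_mono m\<close>
      by (metis Int_commute linorder_neqE_nat strict_mono_less)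
    show "odd_recip_interval (m j) \<subseteq> {0<..b j}" for j
    proof -
      have "1 / real (m j) < b j"
        using m_large[of j] b[of j] m_pos[of j] by (simp add: field_simps)
      then show ?thesis using odd_recip_interval_subset[OF m_pos[of j]] by auto
    qed
  qed
qed

lemma not_Hlog_if_heavy_near_zero:
  assumes A: "\<And>j. A j \<in> sets borel" "\<And>j. A j \<subseteq> {0<..exp (- (4 ^ j :: real))}"
    and mass: "\<And>j. emeasure (spec_measure E f) (A j) = ennreal (((1 / 2) ^ j)\<^sup>2)"
  shows "f \<notin> Hlog E"
proof
  assume "f \<in> Hlog E"
  then obtain r where r: "0 \<le> r"
    "(\<integral>\<^sup>+ l. indicator {0<..} l * ennreal ((ln l)\<^sup>2) \<partial>spec_measure E f) = ennreal r"
    unfolding Hlog_def by (auto simp: less_top_ennreal)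
  obtain j where j: "r < 4 ^ j"
    using real_arch_pow[of 4 r] by auto
  have "0 < l \<and> (4 ^ j)\<^sup>2 \<le> (ln l)\<^sup>2" if "l \<in> A j" for l
  proof -
    from that A(2)[of j] have "0 < l" "l \<le> exp (- (4 ^ j))" by auto
    then show ?thesis by (simp add: ln_sq_ge_if_le_exp)
  qed
  then have "ennreal ((4 ^ j)\<^sup>2) * emeasure (spec_measure E f) (A j) \<le> ennreal r"
    unfolding r(2)[symmetric] by (rule emeasure_le_Hlog_integral[OF A(1)])
  moreover have "(4 ^ j)\<^sup>2 * ((1 / 2) ^ j)\<^sup>2 = (4 :: real) ^ j"
    unfolding power_mult_distrib[symmetric] power2_eq_square by simp
  then have "ennreal ((4 ^ j)\<^sup>2) * emeasure (spec_measure E f) (A j) = ennreal (4 ^ j)"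
    unfolding mass by (simp flip: ennreal_mult)
  ultimately show False
    using j r(1) by (simp add: ennreal_le_iff)
qed

lemma exists_Hsob_not_Hlog:
  assumes spec: "\<forall>k::nat. k \<ge> 1 \<longrightarrow> {1 / real (k + 1)<..1 / real k} \<inter> pvm_spectrum E \<noteq> {}"
    and "0 \<le> t"
  shows "\<exists>f. f \<in> Hsob E t \<and> f \<notin> Hlog E"
proof -
  obtain A where A: "\<And>j. A j \<in> sets borel" "disjoint_family A" "\<And>j. E (A j) \<noteq> (\<lambda>x. 0)"
    and A_small: "\<And>j. A j \<subseteq> {0<..exp (- (4 ^ j :: real))}"
    using spectral_pieces_near_zero[OF spec, of "\<lambda>j. exp (- (4 ^ j))"] by auto
  have "summable (\<lambda>j. \<bar>(1 / 2 :: real) ^ j\<bar>)" by simp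
  then obtain f where mass: "\<And>j. emeasure (spec_measure E f) (A j) = ennreal (((1 / 2) ^ j)\<^sup>2)"
    and AE: "AE l in spec_measure E f. l \<in> (\<Union>j. A j)"
    using exists_vector_with_spectral_masses[OF A] by blast
  have "f \<in> Hsob E t"
  proof (rule Hsob_if_AE_unit_interval[OF _ assms(2)])
    show "AE l in spec_measure E f. l \<in> {0..1}"
      using AE
    proof eventually_elim
      case (elim l)
      then obtain j where "l \<in> A j" by blast
      with A_small[of j] have "0 < l" "l \<le> exp (- (4 ^ j))" by auto
      moreover have "exp (- (4 ^ j :: real)) \<le> 1" by simp
      ultimately show ?case by (simp add: order.trans[of l "exp (- (4 ^ j))"])
    qed
  qed
  moreover have "f \<notin> Hlog E"
    using A(1) A_small mass by (rule not_Hlog_if_heavy_near_zero)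
  ultimately show ?thesis by blast
qed

end

theorem theorem2:
  fixes E :: "real set \<Rightarrow> 'h::{real_inner,complete_space} \<Rightarrow> 'h"
  assumes "pvm E"
    and "pvm_spectrum E \<subseteq> {0..}"
  shows "(spec_delta E > 0 \<longrightarrow> (\<forall>\<epsilon>>0. cont_embed_log E (2 * \<epsilon>)))
       \<and> ((spec_delta E = 0 \<and>
           (\<forall>k::nat. k \<ge> 1 \<longrightarrow> {1 / real (k + 1)<..1 / real k} \<inter> pvm_spectrum E \<noteq> {}))
          \<longrightarrow> (\<forall>\<epsilon>>0. \<exists>f. f \<in> Hsob E (2 * \<epsilon>) \<and> f \<notin> Hlog E))"
proof -
  interpret projection_valued_measure E
    by unfold_locales (fact assms(1))
  have "cont_embed_log E (2 * \<epsilon>)" if gap: "spec_delta E > 0" and "\<epsilon> > 0" for \<epsilon>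
  proof -
    obtain d where "0 < d" "pvm_spectrum E \<inter> {0<..d} = {}"
      using spectral_gap_if_spec_delta_pos[OF gap] .
    with assms(2) \<open>\<epsilon> > 0\<close> show ?thesis
      by (intro cont_embed_log_if_spectral_gap)
  qed
  \<comment> \<open>The hypothesis \<open>spec_delta E = 0\<close> is implied by the interval condition and not needed.\<close>
  moreover have "\<exists>f. f \<in> Hsob E (2 * \<epsilon>) \<and> f \<notin> Hlog E"
    if "\<forall>k::nat. k \<ge> 1 \<longrightarrow> {1 / real (k + 1)<..1 / real k} \<inter> pvm_spectrum E \<noteq> {}" "\<epsilon> > 0"
    for \<epsilon>
    using that by (intro exists_Hsob_not_Hlog) auto
  ultimately show ?thesis by blast
qed

end
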